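(* Let $(S,<_S)$ be a well-founded order which does not embed $R_{2,2}$. The following are equivalent: (1) $(S,<_S)$ does not embed $S_{\omega,2}$; (2) $(D(S),\subsetneq)$ is well-founded; (3) $(\mathrm{CU}(S),\subsetneq)$ is well-founded.
   Context: An order $(S,<_S)$ is a set with a strict partial order (antisymmetric, transitive). An embedding of $(S,<_S)$ into $(R,<_R)$ is an injection $\pi$ with $x<_S y\iff\pi(x)<_R\pi(y)$. $R_{2,2}$ is the order on $\{x_0,x_1,y_0,y_1\}$ whose only relations are $x_0<y_0$, $x_1<y_1$. $S_{\omega,2}$ is the order on $\{x_n\}_{n<\omega}\uplus\{y_n\}_{n<\omega}$ whose relations are exactly $x_m<y_n$ for $m\geq n$. For $x\in S$: $d(x)=\{z\mid z<_S x\}$, $u(x)=\{z\mid x<_S z\}$, $\mathrm{cu}(x)=S\setminus u(x)$; $D(S)=\{d(x)\mid x\in S\}$ and $\mathrm{CU}(S)=\{\mathrm{cu}(x)\mid x\in S\}$. *)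

theory Defs
  imports Main
begin

definition strict_order_on :: "'a set \<Rightarrow> ('a \<Rightarrow> 'a \<Rightarrow> bool) \<Rightarrow> bool" where
  "strict_order_on S lt \<longleftrightarrow>
     (\<forall>x\<in>S. \<not> lt x x) \<and>
     (\<forall>x\<in>S. \<forall>y\<in>S. \<forall>z\<in>S. lt x y \<longrightarrow> lt y z \<longrightarrow> lt x z)"

definition wf_on_set :: "'a set \<Rightarrow> ('a \<Rightarrow> 'a \<Rightarrow> bool) \<Rightarrow> bool" where
  "wf_on_set S lt \<longleftrightarrow> wfP (\<lambda>x y. x \<in> S \<and> y \<in> S \<and> lt x y)"

definition embeds_via :: "'a set \<Rightarrow> ('a \<Rightarrow> 'a \<Rightarrow> bool) \<Rightarrow> 'b set \<Rightarrow> ('b \<Rightarrow> 'b \<Rightarrow> bool)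
    \<Rightarrow> ('a \<Rightarrow> 'b) \<Rightarrow> bool" where
  "embeds_via S ltS R ltR \<pi> \<longleftrightarrow>
     \<pi> ` S \<subseteq> R \<and> inj_on \<pi> S \<and>
     (\<forall>x\<in>S. \<forall>y\<in>S. ltS x y \<longleftrightarrow> ltR (\<pi> x) (\<pi> y))"

definition embeds :: "'a set \<Rightarrow> ('a \<Rightarrow> 'a \<Rightarrow> bool) \<Rightarrow> 'b set \<Rightarrow> ('b \<Rightarrow> 'b \<Rightarrow> bool) \<Rightarrow> bool" where
  "embeds S ltS R ltR \<longleftrightarrow> (\<exists>\<pi>. embeds_via S ltS R ltR \<pi>)"

(* R_{2,2}: elements x_0 = (False,0), x_1 = (False,1), y_0 = (True,0), y_1 = (True,1);
   only relations x_0 < y_0, x_1 < y_1. *)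
definition R22 :: "(bool \<times> nat) set" where
  "R22 = {(False,0), (False,1), (True,0), (True,1)}"

definition R22_lt :: "bool \<times> nat \<Rightarrow> bool \<times> nat \<Rightarrow> bool" where
  "R22_lt a b \<longleftrightarrow> (\<exists>i\<in>{0,1::nat}. a = (False,i) \<and> b = (True,i))"

(* S_{omega,2}: x_n = Inl n, y_n = Inr n; relations exactly x_m < y_n for m \<ge> n. *)
definition Somega2 :: "(nat + nat) set" where
  "Somega2 = UNIV"

definition Somega2_lt :: "nat + nat \<Rightarrow> nat + nat \<Rightarrow> bool" where
  "Somega2_lt a b \<longleftrightarrow> (\<exists>m n. a = Inl m \<and> b = Inr n \<and> m \<ge> n)"

definition dset :: "'a set \<Rightarrow> ('a \<Rightarrow> 'a \<Rightarrow> bool) \<Rightarrow> 'a \<Rightarrow> 'a set" where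
  "dset S lt x = {z \<in> S. lt z x}"

definition uset :: "'a set \<Rightarrow> ('a \<Rightarrow> 'a \<Rightarrow> bool) \<Rightarrow> 'a \<Rightarrow> 'a set" where
  "uset S lt x = {z \<in> S. lt x z}"

definition cuset :: "'a set \<Rightarrow> ('a \<Rightarrow> 'a \<Rightarrow> bool) \<Rightarrow> 'a \<Rightarrow> 'a set" where
  "cuset S lt x = S - uset S lt x"

definition Dfam :: "'a set \<Rightarrow> ('a \<Rightarrow> 'a \<Rightarrow> bool) \<Rightarrow> 'a set set" where
  "Dfam S lt = dset S lt ` S"

definition CUfam :: "'a set \<Rightarrow> ('a \<Rightarrow> 'a \<Rightarrow> bool) \<Rightarrow> 'a set set" where
  "CUfam S lt = cuset S lt ` S"

end

theory Submission
  imports Defs "HOL-Library.Infinite_Set"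
begin

text \<open>
  All three conditions say that \<open>S\<close> contains no pair of sequences \<open>x, y\<close> with
  \<open>x\<^sub>m < y\<^sub>n \<longleftrightarrow> n \<le> m\<close>. A strictly decreasing chain in \<open>D(S)\<close> or in \<open>CU(S)\<close>
  yields such a pair by choosing one separating point between consecutive members.
  Conversely such a pair makes \<open>d(y\<^sub>n)\<close> and \<open>cu(x\<^sub>n)\<close> strictly decreasing as soon
  as \<open>R\<^sub>2\<^sub>,\<^sub>2\<close> does not embed: a point witnessing non-inclusion would form a copy of
  \<open>R\<^sub>2\<^sub>,\<^sub>2\<close> with \<open>x\<^sub>n, y\<^sub>n\<close> or \<open>x\<^sub>n\<^sub>+\<^sub>1, y\<^sub>n\<^sub>+\<^sub>1\<close>.
  Such a pair is a copy of \<open>S\<^sub>\<omega>\<^sub>,\<^sub>2\<close> once the \<open>x\<close>'s and the \<open>y\<close>'s each form an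
  antichain, and by well-foundedness this can be achieved by passing to a subsequence.
\<close>

definition Somega2_pattern :: "'a set \<Rightarrow> ('a \<Rightarrow> 'a \<Rightarrow> bool) \<Rightarrow> (nat \<Rightarrow> 'a) \<Rightarrow> (nat \<Rightarrow> 'a) \<Rightarrow> bool"
  where "Somega2_pattern S lt x y \<longleftrightarrow>
    range x \<subseteq> S \<and> range y \<subseteq> S \<and> (\<forall>m n. lt (x m) (y n) \<longleftrightarrow> n \<le> m)"

lemma strict_order_on_irrefl: "strict_order_on S lt \<Longrightarrow> x \<in> S \<Longrightarrow> \<not> lt x x"
  unfolding strict_order_on_def by blast

lemma strict_order_on_trans:
  "strict_order_on S lt \<Longrightarrow> x \<in> S \<Longrightarrow> y \<in> S \<Longrightarrow> z \<in> S \<Longrightarrow> lt x y \<Longrightarrow> lt y z \<Longrightarrow> lt x z"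
  unfolding strict_order_on_def by blast

lemma wf_on_set_iff_no_descending_chain:
  "wf_on_set S lt \<longleftrightarrow> (\<nexists>f. \<forall>i. f i \<in> S \<and> lt (f (Suc i)) (f i))"
  unfolding wf_on_set_def wf_iff_no_infinite_down_chain[to_pred] by blast

lemma not_wf_on_setI:
  assumes "\<And>i. f i \<in> S" and "\<And>i. lt (f (Suc i)) (f i)"
  shows "\<not> wf_on_set S lt"
  unfolding wf_on_set_iff_no_descending_chain using assms by blast

lemma strict_decseq_separators:
  assumes "\<And>n. F (Suc n) \<subset> F n"
  obtains a where "\<And>i j. a i \<in> F j \<longleftrightarrow> j \<le> i"
proof -
  have "\<forall>n. \<exists>a. a \<in> F n \<and> a \<notin> F (Suc n)" using assms by blast
  then obtain a where a: "\<And>n. a n \<in> F n" "\<And>n. a n \<notin> F (Suc n)" by metis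
  have antimono: "F n \<subseteq> F m" if "m \<le> n" for m n
    using lift_Suc_antimono_le[of F] assms that by blast
  have "a i \<in> F j \<longleftrightarrow> j \<le> i" for i j
    using a antimono[of j i] antimono[of "Suc i" j] by (cases "j \<le> i") auto
  then show thesis using that by blast
qed

lemma embeds_R22I:
  assumes so: "strict_order_on S lt"
    and S: "a0 \<in> S" "b0 \<in> S" "a1 \<in> S" "b1 \<in> S"
    and r: "lt a0 b0" "lt a1 b1" "\<not> lt a0 b1" "\<not> lt a1 b0"
  shows "embeds R22 R22_lt S lt"
proof -
  note irr = strict_order_on_irrefl[OF so] and tr = strict_order_on_trans[OF so]
  have aa: "\<not> lt a0 a1" "\<not> lt a1 a0"
    using tr[OF S(1) S(3) S(4)] tr[OF S(3) S(1) S(2)] r by blast+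
  have n: "\<not> lt b0 b1" "\<not> lt b1 b0" "\<not> lt b0 a0" "\<not> lt b1 a1" "\<not> lt b0 a1" "\<not> lt b1 a0"
    using tr[OF S(1) S(2) S(4)] tr[OF S(3) S(4) S(2)] tr[OF S(2) S(1) S(2)] tr[OF S(4) S(3) S(4)]
      tr[OF S(1) S(2) S(3)] tr[OF S(3) S(4) S(1)] irr[OF S(2)] irr[OF S(4)] r aa by blast+
  have d: "a0 \<noteq> b0" "a0 \<noteq> a1" "a0 \<noteq> b1" "b0 \<noteq> a1" "b0 \<noteq> b1" "a1 \<noteq> b1"
    using r aa n by auto
  define \<pi> where "\<pi> p = (if p = (False, 0) then a0 else if p = (True, 0) then b0
      else if p = (False, 1) then a1 else b1)" for p :: "bool \<times> nat"
  have "embeds_via R22 R22_lt S lt \<pi>"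
    unfolding embeds_via_def R22_def
    using S d r aa n irr by (auto simp: \<pi>_def inj_on_def R22_lt_def)
  then show ?thesis unfolding embeds_def by blast
qed

lemma infinite_antichain_subset:
  fixes f :: "nat \<Rightarrow> 'a"
  assumes so: "strict_order_on S lt" and wf: "wf_on_set S lt"
    and fS: "range f \<subseteq> S" and J: "infinite J"
    and h: "\<And>i j. i \<in> J \<Longrightarrow> j \<in> J \<Longrightarrow> i < j \<Longrightarrow> \<not> lt (f i) (f j)"
  obtains J' where "J' \<subseteq> J" "infinite J'" "\<And>i j. i \<in> J' \<Longrightarrow> j \<in> J' \<Longrightarrow> \<not> lt (f i) (f j)"
proof -
  define J' where "J' = {j \<in> J. \<forall>k\<in>J. \<not> lt (f k) (f j)}"
  have "\<exists>k\<in>J'. j \<le> k" if j: "j \<in> J" for j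
  proof -
    define Q where "Q = f ` {k \<in> J. k = j \<or> lt (f k) (f j)}"
    obtain z where "z \<in> Q" and zmin: "\<And>y. y \<in> S \<and> z \<in> S \<and> lt y z \<Longrightarrow> y \<notin> Q"
      using wf[unfolded wf_on_set_def wfp_eq_minimal, rule_format, of "f j" Q] j
      unfolding Q_def by blast
    then obtain k where k: "z = f k" "k \<in> J" "k = j \<or> lt (f k) (f j)" unfolding Q_def by blast
    \<comment> \<open>\<open>f k\<close> is minimal below \<open>f j\<close>, and by transitivity then minimal among all \<open>f ` J\<close>\<close>
    have "k \<in> J'"
      unfolding J'_def
    proof (intro CollectI conjI ballI notI)
      fix k' assume k': "k' \<in> J" "lt (f k') (f k)"
      then have "lt (f k') (f j)"
        using k(3) strict_order_on_trans[OF so, of "f k'" "f k" "f j"] fS by auto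
      then show False using zmin[of "f k'"] k k' fS unfolding Q_def by blast
    qed (fact k(2))
    moreover have "j \<le> k" using h[OF k(2) j] k(3) by (cases "k < j") auto
    ultimately show ?thesis by blast
  qed
  then have "infinite J'"
    using J by (meson infinite_nat_iff_unbounded_le order_trans)
  moreover have "J' \<subseteq> J" unfolding J'_def by blast
  ultimately show thesis using that unfolding J'_def by blast
qed

lemma Somega2_pattern_reindex:
  "Somega2_pattern S lt x y \<Longrightarrow> strict_mono e \<Longrightarrow> Somega2_pattern S lt (x \<circ> e) (y \<circ> e)"
  unfolding Somega2_pattern_def by (auto simp: strict_mono_less_eq)

lemma Somega2_pattern_antichain_subsequence:
  assumes so: "strict_order_on S lt" and wf: "wf_on_set S lt"
    and p: "Somega2_pattern S lt x y"
  obtains e :: "nat \<Rightarrow> nat" where "strict_mono e"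
    "\<And>i j. \<not> lt (x (e i)) (x (e j))" "\<And>i j. \<not> lt (y (e i)) (y (e j))"
proof -
  note tr = strict_order_on_trans[OF so]
  have xS: "x n \<in> S" and yS: "y n \<in> S" and xy: "lt (x m) (y n) \<longleftrightarrow> n \<le> m" for m n
    using p unfolding Somega2_pattern_def by auto
  have x_asc: "\<not> lt (x i) (x j)" and y_asc: "\<not> lt (y i) (y j)" if "i < j" for i j
  proof -
    have "\<not> lt (x i) (y j)" "lt (x i) (y i)" "lt (x j) (y j)"
      using that by (simp_all add: xy)
    then show "\<not> lt (x i) (x j)" "\<not> lt (y i) (y j)"
      using tr[OF xS xS yS, of i j j] tr[OF xS yS yS, of i i j] by blast+
  qed
  obtain J1 where "J1 \<subseteq> UNIV" "infinite J1" and J1: "\<And>i j. i \<in> J1 \<Longrightarrow> j \<in> J1 \<Longrightarrow> \<not> lt (x i) (x j)"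
    by (rule infinite_antichain_subset[OF so wf _ infinite_UNIV_nat, of x])
      (use xS x_asc in auto)
  obtain J2 where "J2 \<subseteq> J1" "infinite J2" and J2: "\<And>i j. i \<in> J2 \<Longrightarrow> j \<in> J2 \<Longrightarrow> \<not> lt (y i) (y j)"
    by (rule infinite_antichain_subset[OF so wf _ \<open>infinite J1\<close>, of y])
      (use yS y_asc in auto)
  obtain e :: "nat \<Rightarrow> nat" where "strict_mono e" "\<And>n. e n \<in> J2"
    using infinite_enumerate[OF \<open>infinite J2\<close>] by blast
  then show thesis using that J1 J2 \<open>J2 \<subseteq> J1\<close> by blast
qed

lemma embeds_Somega2_if_antichain_pattern:
  assumes so: "strict_order_on S lt" and p: "Somega2_pattern S lt x y"
    and xx: "\<And>i j. \<not> lt (x i) (x j)" and yy: "\<And>i j. \<not> lt (y i) (y j)"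
  shows "embeds Somega2 Somega2_lt S lt"
proof -
  have xS: "x n \<in> S" and yS: "y n \<in> S" and xy: "lt (x m) (y n) \<longleftrightarrow> n \<le> m" for m n
    using p unfolding Somega2_pattern_def by auto
  have yx: "\<not> lt (y i) (x j)" for i j
    using strict_order_on_trans[OF so yS xS yS] xy[of j j] yy by blast
  have x_inj: "x i = x j \<longleftrightarrow> i = j" and y_inj: "y i = y j \<longleftrightarrow> i = j" for i j
    by (metis xy le_antisym order_refl)+
  have x_ne_y: "x i \<noteq> y j" for i j
    by (metis xx xy order_refl)
  define \<pi> where "\<pi> = case_sum x y"
  have "inj \<pi>"
  proof (rule injI)
    fix a b assume "\<pi> a = \<pi> b"
    then show "a = b"
      by (cases a; cases b) (simp_all add: \<pi>_def x_inj y_inj x_ne_y x_ne_y[symmetric])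
  qed
  moreover have "Somega2_lt a b \<longleftrightarrow> lt (\<pi> a) (\<pi> b)" for a b
    by (cases a; cases b) (simp_all add: \<pi>_def Somega2_lt_def xy xx yy yx)
  moreover have "range \<pi> \<subseteq> S"
    using xS yS by (auto simp: \<pi>_def split: sum.splits)
  ultimately have "embeds_via Somega2 Somega2_lt S lt \<pi>"
    unfolding embeds_via_def Somega2_def by blast
  then show ?thesis unfolding embeds_def by blast
qed

lemma embeds_Somega2_iff_pattern:
  assumes "strict_order_on S lt" and "wf_on_set S lt"
  shows "embeds Somega2 Somega2_lt S lt \<longleftrightarrow> (\<exists>x y. Somega2_pattern S lt x y)"
proof
  assume "embeds Somega2 Somega2_lt S lt"
  then obtain \<pi> where \<pi>: "embeds_via Somega2 Somega2_lt S lt \<pi>" unfolding embeds_def by blast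
  have "range \<pi> \<subseteq> S" and lt_iff: "Somega2_lt a b \<longleftrightarrow> lt (\<pi> a) (\<pi> b)" for a b
    using \<pi> unfolding embeds_via_def Somega2_def by auto
  moreover have "lt (\<pi> (Inl m)) (\<pi> (Inr n)) \<longleftrightarrow> n \<le> m" for m n
    using lt_iff[of "Inl m" "Inr n"] by (simp add: Somega2_lt_def)
  ultimately have "Somega2_pattern S lt (\<pi> \<circ> Inl) (\<pi> \<circ> Inr)"
    unfolding Somega2_pattern_def by auto
  then show "\<exists>x y. Somega2_pattern S lt x y" by blast
next
  assume "\<exists>x y. Somega2_pattern S lt x y"
  then obtain x y where p: "Somega2_pattern S lt x y" by blast
  obtain e :: "nat \<Rightarrow> nat" where e: "strict_mono e"
    "\<And>i j. \<not> lt (x (e i)) (x (e j))" "\<And>i j. \<not> lt (y (e i)) (y (e j))"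
    using Somega2_pattern_antichain_subsequence[OF assms p] by blast
  show "embeds Somega2 Somega2_lt S lt"
    by (rule embeds_Somega2_if_antichain_pattern[OF assms(1) Somega2_pattern_reindex[OF p e(1)]])
      (simp_all add: e(2,3))
qed

lemma Somega2_pattern_if_not_wf_Dfam:
  assumes "\<not> wf_on_set (Dfam S lt) (\<subset>)"
  shows "\<exists>x y. Somega2_pattern S lt x y"
proof -
  obtain F where F: "\<And>i. F i \<in> Dfam S lt" "\<And>i. F (Suc i) \<subset> F i"
    using assms unfolding wf_on_set_iff_no_descending_chain by blast
  obtain y where "\<forall>i. y i \<in> S \<and> F i = dset S lt (y i)"
    using F(1) unfolding Dfam_def image_iff by metis
  then have yS: "range y \<subseteq> S" and yF: "\<And>i. F i = dset S lt (y i)" by auto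
  obtain x where x: "\<And>i j. x i \<in> F j \<longleftrightarrow> j \<le> i"
    using strict_decseq_separators[of F] F(2) by blast
  have "range x \<subseteq> S" using x[of _ 0] yF[of 0] unfolding dset_def by auto
  moreover have "lt (x m) (y n) \<longleftrightarrow> n \<le> m" for m n
    using x[of m n] yF[of n] \<open>range x \<subseteq> S\<close> unfolding dset_def by auto
  ultimately show ?thesis using yS unfolding Somega2_pattern_def by blast
qed

lemma Somega2_pattern_if_not_wf_CUfam:
  assumes "\<not> wf_on_set (CUfam S lt) (\<subset>)"
  shows "\<exists>x y. Somega2_pattern S lt x y"
proof -
  obtain F where F: "\<And>i. F i \<in> CUfam S lt" "\<And>i. F (Suc i) \<subset> F i"
    using assms unfolding wf_on_set_iff_no_descending_chain by blast
  obtain b where "\<forall>i. b i \<in> S \<and> F i = cuset S lt (b i)"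
    using F(1) unfolding CUfam_def image_iff by metis
  then have bS: "range b \<subseteq> S" and bF: "\<And>i. F i = cuset S lt (b i)" by auto
  obtain y where y: "\<And>i j. y i \<in> F j \<longleftrightarrow> j \<le> i"
    using strict_decseq_separators[of F] F(2) by blast
  have "range y \<subseteq> S" using y[of _ 0] bF[of 0] unfolding cuset_def by auto
  \<comment> \<open>the \<open>x\<close>-sequence is \<open>b\<close> shifted by one, since \<open>y\<^sub>n \<notin> cu(b\<^sub>m\<^sub>+\<^sub>1)\<close> iff \<open>n \<le> m\<close>\<close>
  moreover have "lt (b (Suc m)) (y n) \<longleftrightarrow> n \<le> m" for m n
    using y[of n "Suc m"] bF[of "Suc m"] \<open>range y \<subseteq> S\<close> unfolding cuset_def uset_def by auto
  ultimately have "Somega2_pattern S lt (b \<circ> Suc) y"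
    using bS unfolding Somega2_pattern_def by auto
  then show ?thesis by blast
qed

lemma not_wf_Dfam_if_Somega2_pattern:
  assumes so: "strict_order_on S lt" and noR: "\<not> embeds R22 R22_lt S lt"
    and p: "Somega2_pattern S lt x y"
  shows "\<not> wf_on_set (Dfam S lt) (\<subset>)"
proof (rule not_wf_on_setI)
  have xS: "x n \<in> S" and yS: "y n \<in> S" and xy: "lt (x m) (y n) \<longleftrightarrow> n \<le> m" for m n
    using p unfolding Somega2_pattern_def by auto
  show "dset S lt (y (Suc n)) \<subset> dset S lt (y n)" for n
  proof
    show "dset S lt (y (Suc n)) \<subseteq> dset S lt (y n)"
    proof
      fix z assume "z \<in> dset S lt (y (Suc n))"
      then have zS: "z \<in> S" and "lt z (y (Suc n))" unfolding dset_def by auto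
      moreover have "lt (x n) (y n)" "\<not> lt (x n) (y (Suc n))" using xy by auto
      ultimately have "lt z (y n)"
        using embeds_R22I[OF so xS[of n] yS[of n] zS yS[of "Suc n"]] noR by blast
      then show "z \<in> dset S lt (y n)" using zS unfolding dset_def by blast
    qed
    have "x n \<in> dset S lt (y n)" "x n \<notin> dset S lt (y (Suc n))"
      using xy xS unfolding dset_def by auto
    then show "dset S lt (y (Suc n)) \<noteq> dset S lt (y n)" by blast
  qed
  show "dset S lt (y n) \<in> Dfam S lt" for n unfolding Dfam_def using yS by blast
qed

lemma not_wf_CUfam_if_Somega2_pattern:
  assumes so: "strict_order_on S lt" and noR: "\<not> embeds R22 R22_lt S lt"
    and p: "Somega2_pattern S lt x y"
  shows "\<not> wf_on_set (CUfam S lt) (\<subset>)"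
proof (rule not_wf_on_setI)
  have xS: "x n \<in> S" and yS: "y n \<in> S" and xy: "lt (x m) (y n) \<longleftrightarrow> n \<le> m" for m n
    using p unfolding Somega2_pattern_def by auto
  have up: "uset S lt (x n) \<subset> uset S lt (x (Suc n))" for n
  proof
    show "uset S lt (x n) \<subseteq> uset S lt (x (Suc n))"
    proof
      fix z assume "z \<in> uset S lt (x n)"
      then have zS: "z \<in> S" and "lt (x n) z" unfolding uset_def by auto
      moreover have "lt (x (Suc n)) (y (Suc n))" "\<not> lt (x n) (y (Suc n))" using xy by auto
      ultimately have "lt (x (Suc n)) z"
        using embeds_R22I[OF so xS[of n] zS xS[of "Suc n"] yS[of "Suc n"]] noR by blast
      then show "z \<in> uset S lt (x (Suc n))" using zS unfolding uset_def by blast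
    qed
    have "y (Suc n) \<in> uset S lt (x (Suc n))" "y (Suc n) \<notin> uset S lt (x n)"
      using xy yS unfolding uset_def by auto
    then show "uset S lt (x n) \<noteq> uset S lt (x (Suc n))" by blast
  qed
  show "cuset S lt (x (Suc n)) \<subset> cuset S lt (x n)" for n
    using up[of n] unfolding cuset_def uset_def by blast
  show "cuset S lt (x n) \<in> CUfam S lt" for n unfolding CUfam_def using xS by blast
qed

theorem lemma2p6:
  fixes S :: "'a set" and lt :: "'a \<Rightarrow> 'a \<Rightarrow> bool"
  assumes "strict_order_on S lt"
    and "wf_on_set S lt"
    and "\<not> embeds R22 R22_lt S lt"
  shows "(\<not> embeds Somega2 Somega2_lt S lt \<longleftrightarrow> wf_on_set (Dfam S lt) (\<subset>))
       \<and> (wf_on_set (Dfam S lt) (\<subset>) \<longleftrightarrow> wf_on_set (CUfam S lt) (\<subset>))"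
proof -
  have "wf_on_set (Dfam S lt) (\<subset>) \<longleftrightarrow> (\<nexists>x y. Somega2_pattern S lt x y)"
    using Somega2_pattern_if_not_wf_Dfam[of S lt] not_wf_Dfam_if_Somega2_pattern[OF assms(1,3)] by blast
  moreover have "wf_on_set (CUfam S lt) (\<subset>) \<longleftrightarrow> (\<nexists>x y. Somega2_pattern S lt x y)"
    using Somega2_pattern_if_not_wf_CUfam[of S lt] not_wf_CUfam_if_Somega2_pattern[OF assms(1,3)] by blast
  ultimately show ?thesis
    using embeds_Somega2_iff_pattern[OF assms(1,2)] by blast
qed

end
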